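(* If $X$ and $Y$ are metric spaces which are coarsely homotopy equivalent, then $\mathrm{c\text{-}cat}(X)=\mathrm{c\text{-}cat}(Y)$.
   Context: Notation: $\mathbb{R}_+=[0,\infty)$. For metric spaces $X,Y$, a (not necessarily continuous) map $f:X\to Y$ is controlled if for every $r>0$ there is $S>0$ with $d(x,x')<r\Rightarrow d(f(x),f(x'))<S$; proper if preimages of bounded sets are bounded; coarse if both. For a coarse map $q:X\to\mathbb{R}_+$, the $q$-cylinder is $I_qX=\{(x,t)\in X\times\mathbb{R}_+ : t\le q(x)\}$ with the metric restricted from the product (sup) metric, and $i_0(x)=(x,0)$, $i_1(x)=(x,q(x))$. Coarse maps $f,g:X\to Y$ are coarsely homotopic if there exist a coarse $q:X\to\mathbb{R}_+$ and a coarse $H:I_qX\to Y$ with $H\circ i_0=f$, $H\circ i_1=g$. A coarse map $f:X\to Y$ is a coarse homotopy equivalence if there is a coarse map $g:Y\to X$ with $g\circ f$ and $f\circ g$ coarsely homotopic to $1_X$ and $1_Y$; $X,Y$ are then coarsely homotopy equivalent. A subset $A\subseteq X$ is coarsely categorical if there exist coarse maps $\alpha:\mathbb{R}_+\to X$ and $j:A\to\mathbb{R}_+$ such that $\alpha\circ j$ is coarsely homotopic to the inclusion $A\hookrightarrow X$. The (reduced) coarse Lusternik–Schnirelmann category $\mathrm{c\text{-}cat}(X)$ is the least $k$ such that $X$ can be covered by $k+1$ coarsely categorical subsets (and $\infty$ if none exists). *)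

theory Defs
  imports "HOL-Analysis.Analysis" "HOL-Library.Extended_Nat"
begin

text \<open>Metric spaces are given as a carrier with a distance function (locale Metric_space).
  Maps are arbitrary functions; only their values on the carrier matter.\<close>

definition controlled_map :: "'a set \<Rightarrow> ('a \<Rightarrow> 'a \<Rightarrow> real) \<Rightarrow> 'b set \<Rightarrow> ('b \<Rightarrow> 'b \<Rightarrow> real) \<Rightarrow> ('a \<Rightarrow> 'b) \<Rightarrow> bool" where
  "controlled_map M d N e f \<longleftrightarrow>
     (\<forall>r>0. \<exists>S>0. \<forall>x\<in>M. \<forall>x'\<in>M. d x x' < r \<longrightarrow> e (f x) (f x') < S)"

definition proper_map :: "'a set \<Rightarrow> ('a \<Rightarrow> 'a \<Rightarrow> real) \<Rightarrow> 'b set \<Rightarrow> ('b \<Rightarrow> 'b \<Rightarrow> real) \<Rightarrow> ('a \<Rightarrow> 'b) \<Rightarrow> bool" where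
  "proper_map M d N e f \<longleftrightarrow>
     (\<forall>B. B \<subseteq> N \<longrightarrow> Metric_space.mbounded N e B \<longrightarrow> Metric_space.mbounded M d {x\<in>M. f x \<in> B})"

definition coarse_map :: "'a set \<Rightarrow> ('a \<Rightarrow> 'a \<Rightarrow> real) \<Rightarrow> 'b set \<Rightarrow> ('b \<Rightarrow> 'b \<Rightarrow> real) \<Rightarrow> ('a \<Rightarrow> 'b) \<Rightarrow> bool" where
  "coarse_map M d N e f \<longleftrightarrow> f ` M \<subseteq> N \<and> controlled_map M d N e f \<and> proper_map M d N e f"

abbreviation Rplus :: "real set" where "Rplus \<equiv> {0..}"

definition cylinder :: "'a set \<Rightarrow> ('a \<Rightarrow> real) \<Rightarrow> ('a \<times> real) set" where
  "cylinder M q = {(x, t). x \<in> M \<and> 0 \<le> t \<and> t \<le> q x}"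

definition cyl_dist :: "('a \<Rightarrow> 'a \<Rightarrow> real) \<Rightarrow> ('a \<times> real) \<Rightarrow> ('a \<times> real) \<Rightarrow> real" where
  "cyl_dist d p p' = max (d (fst p) (fst p')) \<bar>snd p - snd p'\<bar>"

definition coarsely_homotopic :: "'a set \<Rightarrow> ('a \<Rightarrow> 'a \<Rightarrow> real) \<Rightarrow> 'b set \<Rightarrow> ('b \<Rightarrow> 'b \<Rightarrow> real) \<Rightarrow> ('a \<Rightarrow> 'b) \<Rightarrow> ('a \<Rightarrow> 'b) \<Rightarrow> bool" where
  "coarsely_homotopic M d N e f g \<longleftrightarrow>
     (\<exists>q H. coarse_map M d Rplus dist q \<and>
            coarse_map (cylinder M q) (cyl_dist d) N e H \<and>
            (\<forall>x\<in>M. H (x, 0) = f x) \<and> (\<forall>x\<in>M. H (x, q x) = g x))"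

definition coarse_homotopy_equivalent :: "'a set \<Rightarrow> ('a \<Rightarrow> 'a \<Rightarrow> real) \<Rightarrow> 'b set \<Rightarrow> ('b \<Rightarrow> 'b \<Rightarrow> real) \<Rightarrow> bool" where
  "coarse_homotopy_equivalent M d N e \<longleftrightarrow>
     (\<exists>f g. coarse_map M d N e f \<and> coarse_map N e M d g \<and>
            coarsely_homotopic M d M d (g \<circ> f) id \<and>
            coarsely_homotopic N e N e (f \<circ> g) id)"

definition coarsely_categorical :: "'a set \<Rightarrow> ('a \<Rightarrow> 'a \<Rightarrow> real) \<Rightarrow> 'a set \<Rightarrow> bool" where
  "coarsely_categorical M d A \<longleftrightarrow> A \<subseteq> M \<and>
     (\<exists>\<alpha> j. coarse_map Rplus dist M d \<alpha> \<and> coarse_map A d Rplus dist j \<and>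
            coarsely_homotopic A d M d (\<alpha> \<circ> j) id)"

definition ccat_cover :: "'a set \<Rightarrow> ('a \<Rightarrow> 'a \<Rightarrow> real) \<Rightarrow> nat \<Rightarrow> bool" where
  "ccat_cover M d k \<longleftrightarrow>
     (\<exists>U :: nat \<Rightarrow> 'a set. (\<forall>i\<le>k. coarsely_categorical M d (U i)) \<and> M = (\<Union>i\<le>k. U i))"

definition c_cat :: "'a set \<Rightarrow> ('a \<Rightarrow> 'a \<Rightarrow> real) \<Rightarrow> enat" where
  "c_cat M d = (if \<exists>k. ccat_cover M d k then enat (LEAST k. ccat_cover M d k) else \<infinity>)"

end

theory Submission
  imports Defs
begin

(* Let f : X -> Y and g : Y -> X be a coarse homotopy equivalence.  If alpha o j is coarsely
   homotopic to the inclusion of U in X, then on V = g^-1(U) the map (f o alpha) o (j o g) is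
   coarsely homotopic to f o g, hence to the inclusion of V in Y; so V is coarsely categorical.
   Pulling back along g turns a cover of X by k+1 coarsely categorical sets into one of Y, and
   symmetrically along f, so X and Y admit such covers for exactly the same k.

   The one geometric ingredient is transitivity of coarse homotopy.  Homotopies over q1 and q2
   are stacked on the cylinder of q1 + q2, which is the cylinder of q1 together with a copy of
   the cylinder of q2 shifted up by q1.  The stacked map is coarse on each half, and nearby points
   of different halves are joined through the graph of q1, so it is coarse on the union. *)

lemma Metric_space_cyl_dist:
  assumes "Metric_space M d"
  shows "Metric_space (M \<times> (UNIV :: real set)) (cyl_dist d)"
proof
  interpret Metric_space M d by fact
  fix p p' p'' :: "'a \<times> real" assume "p \<in> M \<times> UNIV" "p' \<in> M \<times> UNIV" "p'' \<in> M \<times> UNIV"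
  then have "d (fst p) (fst p'') \<le> d (fst p) (fst p') + d (fst p') (fst p'')"
    by (intro triangle) auto
  moreover have "\<bar>snd p - snd p''\<bar> \<le> \<bar>snd p - snd p'\<bar> + \<bar>snd p' - snd p''\<bar>"
    by arith
  ultimately show "cyl_dist d p p'' \<le> cyl_dist d p p' + cyl_dist d p' p''"
    unfolding cyl_dist_def by linarith
next
  fix p p' :: "'a \<times> real" assume "p \<in> M \<times> UNIV" "p' \<in> M \<times> UNIV"
  then show "cyl_dist d p p' = 0 \<longleftrightarrow> p = p'"
    using Metric_space.nonneg[OF assms, of "fst p" "fst p'"] Metric_space.zero[OF assms]
    by (auto simp: cyl_dist_def max_def prod_eq_iff)
qed (auto simp: cyl_dist_def Metric_space.commute[OF assms] abs_minus_commute)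

lemma cylinder_subset: "cylinder M q \<subseteq> M \<times> UNIV"
  by (auto simp: cylinder_def)

lemma mem_cylinder: "p \<in> cylinder M q \<longleftrightarrow> fst p \<in> M \<and> 0 \<le> snd p \<and> snd p \<le> q (fst p)"
  by (cases p) (simp add: cylinder_def)

lemma mbounded_subspace_iff:
  assumes "Metric_space M d" "A \<subseteq> M"
  shows "Metric_space.mbounded A d T \<longleftrightarrow> Metric_space.mbounded M d T \<and> T \<subseteq> A"
  using assms by (intro Submetric.mbounded_submetric) (simp add: Submetric_def Submetric_axioms_def)

lemma mbounded_Rplus_iff: "Metric_space.mbounded Rplus dist B \<longleftrightarrow> bounded B \<and> B \<subseteq> Rplus"
  using mbounded_subspace_iff[OF Met_TC.subspace[of UNIV], of Rplus] by simp

section \<open>Coarse maps\<close>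

lemma proper_map_iff:
  assumes "Metric_space M d" "Metric_space N e"
  shows "proper_map M d N e f \<longleftrightarrow>
    (\<forall>B\<subseteq>N. (\<exists>C. \<forall>u\<in>B. \<forall>v\<in>B. e u v \<le> C) \<longrightarrow>
       (\<exists>D. \<forall>x\<in>M. \<forall>y\<in>M. f x \<in> B \<longrightarrow> f y \<in> B \<longrightarrow> d x y \<le> D))"
proof -
  have "Metric_space.mbounded M d {x \<in> M. f x \<in> B} \<longleftrightarrow>
      (\<exists>D. \<forall>x\<in>M. \<forall>y\<in>M. f x \<in> B \<longrightarrow> f y \<in> B \<longrightarrow> d x y \<le> D)" for B
    unfolding Metric_space.mbounded_alt[OF assms(1)] by blast
  moreover have "Metric_space.mbounded N e B \<longleftrightarrow> (\<exists>C. \<forall>u\<in>B. \<forall>v\<in>B. e u v \<le> C)"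
    if "B \<subseteq> N" for B
    using that unfolding Metric_space.mbounded_alt[OF assms(2)] by blast
  ultimately show ?thesis
    unfolding proper_map_def by simp
qed

lemma controlled_map_compose:
  assumes "f ` M \<subseteq> N" "controlled_map M d N e f" "controlled_map N e P p g"
  shows "controlled_map M d P p (g \<circ> f)"
  unfolding controlled_map_def
proof (intro allI impI)
  fix r :: real assume "r > 0"
  then obtain S where "S > 0" and S: "\<forall>x\<in>M. \<forall>x'\<in>M. d x x' < r \<longrightarrow> e (f x) (f x') < S"
    using assms(2) unfolding controlled_map_def by blast
  then obtain T where "T > 0" and T: "\<forall>y\<in>N. \<forall>y'\<in>N. e y y' < S \<longrightarrow> p (g y) (g y') < T"
    using assms(3) unfolding controlled_map_def by blast
  show "\<exists>T>0. \<forall>x\<in>M. \<forall>x'\<in>M. d x x' < r \<longrightarrow> p ((g \<circ> f) x) ((g \<circ> f) x') < T"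
    using \<open>T > 0\<close> S T assms(1) by (auto simp: image_subset_iff)
qed

lemma proper_map_compose:
  assumes "f ` M \<subseteq> N" "proper_map M d N e f" "proper_map N e P p g"
  shows "proper_map M d P p (g \<circ> f)"
  unfolding proper_map_def
proof (intro allI impI)
  fix B assume "B \<subseteq> P" "Metric_space.mbounded P p B"
  then have "Metric_space.mbounded N e {y \<in> N. g y \<in> B}"
    by (rule assms(3)[unfolded proper_map_def, rule_format])
  then have "Metric_space.mbounded M d {x \<in> M. f x \<in> {y \<in> N. g y \<in> B}}"
    by (rule assms(2)[unfolded proper_map_def, rule_format, rotated]) blast
  moreover have "{x \<in> M. f x \<in> {y \<in> N. g y \<in> B}} = {x \<in> M. (g \<circ> f) x \<in> B}"
    using assms(1) by auto
  ultimately show "Metric_space.mbounded M d {x \<in> M. (g \<circ> f) x \<in> B}"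
    by (simp only:)
qed

lemma coarse_map_compose:
  assumes "coarse_map M d N e f" "coarse_map N e P p g"
  shows "coarse_map M d P p (g \<circ> f)"
proof -
  have f: "f ` M \<subseteq> N" "controlled_map M d N e f" "proper_map M d N e f"
    and g: "g ` N \<subseteq> P" "controlled_map N e P p g" "proper_map N e P p g"
    using assms by (simp_all add: coarse_map_def)
  have "(g \<circ> f) ` M \<subseteq> P"
    using f(1) g(1) by (auto simp: image_subset_iff)
  with controlled_map_compose[OF f(1,2) g(2)] proper_map_compose[OF f(1,3) g(3)]
  show ?thesis
    by (simp add: coarse_map_def)
qed

lemma coarse_map_restrict:
  assumes "Metric_space M d" "A \<subseteq> M" "coarse_map M d N e f"
  shows "coarse_map A d N e f"
  unfolding coarse_map_def
proof (intro conjI)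
  show "f ` A \<subseteq> N"
    using assms(2,3) by (auto simp: coarse_map_def)
  show "controlled_map A d N e f"
    using assms(2,3) unfolding coarse_map_def controlled_map_def by (meson subsetD)
  show "proper_map A d N e f"
    unfolding proper_map_def
  proof (intro allI impI)
    fix B assume "B \<subseteq> N" "Metric_space.mbounded N e B"
    then have "Metric_space.mbounded M d {x \<in> M. f x \<in> B}"
      using assms(3) by (simp add: coarse_map_def proper_map_def)
    then have "Metric_space.mbounded M d {x \<in> A. f x \<in> B}"
      by (rule Metric_space.mbounded_subset[OF assms(1)]) (use assms(2) in auto)
    then show "Metric_space.mbounded A d {x \<in> A. f x \<in> B}"
      unfolding mbounded_subspace_iff[OF assms(1,2)] by blast
  qed
qed

lemma coarse_map_corestrict:
  assumes "Metric_space N e" "N' \<subseteq> N" "f ` M \<subseteq> N'" "coarse_map M d N e f"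
  shows "coarse_map M d N' e f"
  unfolding coarse_map_def
proof (intro conjI)
  show "controlled_map M d N' e f"
    using assms(4) by (simp add: coarse_map_def controlled_map_def)
  show "proper_map M d N' e f"
    unfolding proper_map_def
  proof (intro allI impI)
    fix B assume "B \<subseteq> N'" "Metric_space.mbounded N' e B"
    then have "B \<subseteq> N" "Metric_space.mbounded N e B"
      using assms(2) mbounded_subspace_iff[OF assms(1,2)] by auto
    then show "Metric_space.mbounded M d {x \<in> M. f x \<in> B}"
      using assms(4) unfolding coarse_map_def proper_map_def by blast
  qed
qed fact

lemma coarse_map_id:
  assumes "Metric_space M d" "A \<subseteq> M"
  shows "coarse_map A d M d id"
  unfolding coarse_map_def
proof (intro conjI)
  show "id ` A \<subseteq> M" "controlled_map A d M d id"
    using assms(2) unfolding controlled_map_def by auto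
  show "proper_map A d M d id"
    unfolding proper_map_def
  proof (intro allI impI)
    fix B assume "Metric_space.mbounded M d B"
    then have "Metric_space.mbounded M d {x \<in> A. id x \<in> B}"
      by (rule Metric_space.mbounded_subset[OF assms(1)]) auto
    then show "Metric_space.mbounded A d {x \<in> A. id x \<in> B}"
      unfolding mbounded_subspace_iff[OF assms] by blast
  qed
qed

lemma coarse_map_cong:
  assumes "\<And>x. x \<in> M \<Longrightarrow> f x = g x"
  shows "coarse_map M d N e f \<longleftrightarrow> coarse_map M d N e g"
proof -
  have "f ` M = g ` M" "\<And>B. {x \<in> M. f x \<in> B} = {x \<in> M. g x \<in> B}"
    using assms by auto
  moreover have "(\<forall>x\<in>M. \<forall>x'\<in>M. d x x' < r \<longrightarrow> e (f x) (f x') < S) \<longleftrightarrow>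
      (\<forall>x\<in>M. \<forall>x'\<in>M. d x x' < r \<longrightarrow> e (g x) (g x') < S)" for r S
    using assms by auto
  ultimately show ?thesis
    unfolding coarse_map_def controlled_map_def proper_map_def by presburger
qed

lemma controlled_map_Un:
  assumes PQ: "Metric_space (P \<union> Q) d" and N: "Metric_space N e"
    and img: "f ` (P \<union> Q) \<subseteq> N"
    and fP: "controlled_map P d N e f" and fQ: "controlled_map Q d N e f"
    and link: "\<And>r. r > 0 \<Longrightarrow> \<exists>R>0. \<forall>p\<in>P. \<forall>p'\<in>Q. d p p' < r \<longrightarrow>
                 (\<exists>z\<in>P \<inter> Q. d p z < R \<and> d z p' < R)"
  shows "controlled_map (P \<union> Q) d N e f"
  unfolding controlled_map_def
proof (intro allI impI)
  fix r :: real assume "r > 0"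
  then obtain R where "R > 0" and R: "\<forall>p\<in>P. \<forall>p'\<in>Q. d p p' < r \<longrightarrow>
      (\<exists>z\<in>P \<inter> Q. d p z < R \<and> d z p' < R)"
    using link by blast
  have "max r R > 0"
    using \<open>r > 0\<close> by simp
  then obtain SP SQ where "SP > 0" "SQ > 0"
    and SP: "\<forall>x\<in>P. \<forall>x'\<in>P. d x x' < max r R \<longrightarrow> e (f x) (f x') < SP"
    and SQ: "\<forall>x\<in>Q. \<forall>x'\<in>Q. d x x' < max r R \<longrightarrow> e (f x) (f x') < SQ"
    using fP fQ unfolding controlled_map_def by blast
  have mixed: "e (f p) (f p') < SP + SQ" if p: "p \<in> P" "p' \<in> Q" "d p p' < r" for p p'
  proof -
    obtain z where z: "z \<in> P" "z \<in> Q" "d p z < R" "d z p' < R"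
      using R p by blast
    have "e (f p) (f p') \<le> e (f p) (f z) + e (f z) (f p')"
      using img p z by (intro Metric_space.triangle[OF N]) auto
    also have "\<dots> < SP + SQ"
      using SP SQ p z by (simp add: add_strict_mono less_max_iff_disj)
    finally show ?thesis .
  qed
  show "\<exists>S>0. \<forall>x\<in>P \<union> Q. \<forall>x'\<in>P \<union> Q. d x x' < r \<longrightarrow> e (f x) (f x') < S"
  proof (intro exI[of _ "SP + SQ"] conjI ballI impI)
    show "SP + SQ > 0"
      using \<open>SP > 0\<close> \<open>SQ > 0\<close> by simp
    fix x x' assume x: "x \<in> P \<union> Q" "x' \<in> P \<union> Q" and "d x x' < r"
    then have "d x' x < r"
      by (simp add: Metric_space.commute[OF PQ])
    consider "x \<in> P" "x' \<in> P" | "x \<in> Q" "x' \<in> Q" | "x \<in> P" "x' \<in> Q" | "x \<in> Q" "x' \<in> P"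
      using x by blast
    then show "e (f x) (f x') < SP + SQ"
    proof cases
      case 1 then show ?thesis using SP \<open>SQ > 0\<close> \<open>d x x' < r\<close> by fastforce
    next
      case 2 then show ?thesis using SQ \<open>SP > 0\<close> \<open>d x x' < r\<close> by fastforce
    next
      case 3 then show ?thesis using mixed \<open>d x x' < r\<close> by blast
    next
      case 4 then show ?thesis using mixed[of x' x] \<open>d x' x < r\<close> Metric_space.commute[OF N] by simp
    qed
  qed
qed

lemma proper_map_Un:
  assumes PQ: "Metric_space (P \<union> Q) d"
    and fP: "proper_map P d N e f" and fQ: "proper_map Q d N e f"
  shows "proper_map (P \<union> Q) d N e f"
  unfolding proper_map_def
proof (intro allI impI)
  fix B assume "B \<subseteq> N" "Metric_space.mbounded N e B"
  then have "Metric_space.mbounded P d {x \<in> P. f x \<in> B}" "Metric_space.mbounded Q d {x \<in> Q. f x \<in> B}"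
    using fP fQ unfolding proper_map_def by blast+
  then have "Metric_space.mbounded (P \<union> Q) d ({x \<in> P. f x \<in> B} \<union> {x \<in> Q. f x \<in> B})"
    using mbounded_subspace_iff[OF PQ, of P] mbounded_subspace_iff[OF PQ, of Q]
    by (simp add: Metric_space.mbounded_Un[OF PQ])
  moreover have "{x \<in> P. f x \<in> B} \<union> {x \<in> Q. f x \<in> B} = {x \<in> P \<union> Q. f x \<in> B}"
    by blast
  ultimately show "Metric_space.mbounded (P \<union> Q) d {x \<in> P \<union> Q. f x \<in> B}"
    by (simp only:)
qed

lemma coarse_map_Un:
  assumes "Metric_space (P \<union> Q) d" "Metric_space N e"
    and "coarse_map P d N e f" "coarse_map Q d N e f"
    and "\<And>r. r > 0 \<Longrightarrow> \<exists>R>0. \<forall>p\<in>P. \<forall>p'\<in>Q. d p p' < r \<longrightarrow>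
                 (\<exists>z\<in>P \<inter> Q. d p z < R \<and> d z p' < R)"
  shows "coarse_map (P \<union> Q) d N e f"
proof -
  have "f ` (P \<union> Q) \<subseteq> N"
    using assms(3,4) by (auto simp: coarse_map_def)
  moreover have "controlled_map (P \<union> Q) d N e f"
    using assms by (intro controlled_map_Un[OF assms(1,2) \<open>f ` (P \<union> Q) \<subseteq> N\<close>])
      (simp_all add: coarse_map_def)
  moreover have "proper_map (P \<union> Q) d N e f"
    using assms by (intro proper_map_Un[OF assms(1)]) (simp_all add: coarse_map_def)
  ultimately show ?thesis
    by (simp add: coarse_map_def)
qed

lemma controlled_map_add:
  fixes q1 q2 :: "'a \<Rightarrow> real"
  assumes "controlled_map A d N dist q1" "controlled_map A d N dist q2"
  shows "controlled_map A d N dist (\<lambda>x. q1 x + q2 x)"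
  unfolding controlled_map_def
proof (intro allI impI)
  fix r :: real assume "r > 0"
  obtain S1 where "S1 > 0" and S1: "\<forall>x\<in>A. \<forall>x'\<in>A. d x x' < r \<longrightarrow> dist (q1 x) (q1 x') < S1"
    using assms(1) \<open>r > 0\<close> unfolding controlled_map_def by blast
  obtain S2 where "S2 > 0" and S2: "\<forall>x\<in>A. \<forall>x'\<in>A. d x x' < r \<longrightarrow> dist (q2 x) (q2 x') < S2"
    using assms(2) \<open>r > 0\<close> unfolding controlled_map_def by blast
  show "\<exists>S>0. \<forall>x\<in>A. \<forall>x'\<in>A. d x x' < r \<longrightarrow> dist (q1 x + q2 x) (q1 x' + q2 x') < S"
  proof (intro exI[of _ "S1 + S2"] conjI ballI impI)
    fix x x' assume "x \<in> A" "x' \<in> A" "d x x' < r"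
    then have "\<bar>q1 x - q1 x'\<bar> < S1" "\<bar>q2 x - q2 x'\<bar> < S2"
      using S1 S2 by (simp_all add: dist_real_def)
    then show "dist (q1 x + q2 x) (q1 x' + q2 x') < S1 + S2"
      unfolding dist_real_def by linarith
  qed (use \<open>S1 > 0\<close> \<open>S2 > 0\<close> in simp)
qed

lemma proper_map_add_Rplus:
  assumes A: "Metric_space A d" and q1: "proper_map A d Rplus dist q1"
    and nonneg: "\<And>x. x \<in> A \<Longrightarrow> 0 \<le> q1 x" "\<And>x. x \<in> A \<Longrightarrow> 0 \<le> q2 x"
  shows "proper_map A d Rplus dist (\<lambda>x. q1 x + q2 x)"
  unfolding proper_map_def
proof (intro allI impI)
  fix B assume "B \<subseteq> Rplus" "Metric_space.mbounded Rplus dist B"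
  then have "bounded B"
    by (simp add: mbounded_Rplus_iff)
  then obtain b where b: "\<forall>u\<in>B. \<bar>u\<bar> \<le> b"
    by (auto simp: bounded_real)
  have "{0..b} \<subseteq> Rplus" "Metric_space.mbounded Rplus dist {0..b}"
    by (auto simp: mbounded_Rplus_iff)
  then have "Metric_space.mbounded A d {x \<in> A. q1 x \<in> {0..b}}"
    using q1 unfolding proper_map_def by blast
  moreover have "{x \<in> A. q1 x + q2 x \<in> B} \<subseteq> {x \<in> A. q1 x \<in> {0..b}}"
  proof (intro subsetI CollectI conjI)
    fix x assume "x \<in> {x \<in> A. q1 x + q2 x \<in> B}"
    then have "x \<in> A" "q1 x + q2 x \<le> b"
      using b by (auto simp: abs_le_iff)
    then show "x \<in> A" "q1 x \<in> {0..b}"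
      using nonneg[OF \<open>x \<in> A\<close>] by auto
  qed
  ultimately show "Metric_space.mbounded A d {x \<in> A. q1 x + q2 x \<in> B}"
    by (rule Metric_space.mbounded_subset[OF A])
qed

lemma coarse_map_add_Rplus:
  assumes "Metric_space A d" "coarse_map A d Rplus dist q1" "coarse_map A d Rplus dist q2"
  shows "coarse_map A d Rplus dist (\<lambda>x. q1 x + q2 x)"
proof -
  have nonneg: "\<And>x. x \<in> A \<Longrightarrow> 0 \<le> q1 x" "\<And>x. x \<in> A \<Longrightarrow> 0 \<le> q2 x"
    using assms(2,3) by (auto simp: coarse_map_def)
  then have "(\<lambda>x. q1 x + q2 x) ` A \<subseteq> Rplus"
    by auto
  moreover have "controlled_map A d Rplus dist (\<lambda>x. q1 x + q2 x)"
    using assms(2,3) by (intro controlled_map_add) (simp_all add: coarse_map_def)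
  moreover have "proper_map A d Rplus dist (\<lambda>x. q1 x + q2 x)"
    using assms(2) by (intro proper_map_add_Rplus[OF assms(1) _ nonneg]) (simp add: coarse_map_def)
  ultimately show ?thesis
    by (simp add: coarse_map_def)
qed

section \<open>Shears and stacked cylinders\<close>

(* The shear (x, t) |-> (g x, t - s x) covers both pulling a cylinder back along g (s = 0) and
   moving the upper half of a stacked cylinder down onto the cylinder of q2 (g = id, s = q1). *)
lemma controlled_map_shear:
  assumes g: "controlled_map B d' A d g" and s: "controlled_map B d' UNIV dist s"
    and P: "P \<subseteq> B \<times> UNIV"
  shows "controlled_map P (cyl_dist d') Q (cyl_dist d) (\<lambda>p. (g (fst p), snd p - s (fst p)))"
  unfolding controlled_map_def
proof (intro allI impI)
  fix r :: real assume "r > 0"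
  then obtain Sg Ss where "Sg > 0" "Ss > 0"
    and Sg: "\<forall>x\<in>B. \<forall>x'\<in>B. d' x x' < r \<longrightarrow> d (g x) (g x') < Sg"
    and Ss: "\<forall>x\<in>B. \<forall>x'\<in>B. d' x x' < r \<longrightarrow> dist (s x) (s x') < Ss"
    using g s unfolding controlled_map_def by blast
  show "\<exists>S>0. \<forall>p\<in>P. \<forall>p'\<in>P. cyl_dist d' p p' < r \<longrightarrow>
      cyl_dist d (g (fst p), snd p - s (fst p)) (g (fst p'), snd p' - s (fst p')) < S"
  proof (intro exI[of _ "max Sg (r + Ss)"] conjI ballI impI)
    show "max Sg (r + Ss) > 0"
      using \<open>Sg > 0\<close> by simp
    fix p p' assume "p \<in> P" "p' \<in> P" "cyl_dist d' p p' < r"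
    then have "fst p \<in> B" "fst p' \<in> B" "d' (fst p) (fst p') < r" "\<bar>snd p - snd p'\<bar> < r"
      using P by (auto simp: cyl_dist_def)
    then have "d (g (fst p)) (g (fst p')) < Sg" "\<bar>s (fst p) - s (fst p')\<bar> < Ss"
      using Sg Ss by (auto simp: dist_real_def)
    moreover have "\<bar>(snd p - s (fst p)) - (snd p' - s (fst p'))\<bar> < r + Ss"
      using \<open>\<bar>snd p - snd p'\<bar> < r\<close> calculation(2) by linarith
    ultimately show "cyl_dist d (g (fst p), snd p - s (fst p)) (g (fst p'), snd p' - s (fst p'))
        < max Sg (r + Ss)"
      by (auto simp: cyl_dist_def max_def)
  qed
qed

lemma proper_map_shear:
  assumes A: "Metric_space A d" and B: "Metric_space B d'"
    and g: "proper_map B d' A d g" and s: "controlled_map B d' UNIV dist s"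
    and P: "P \<subseteq> B \<times> UNIV" and Q: "Q \<subseteq> A \<times> UNIV"
  shows "proper_map P (cyl_dist d') Q (cyl_dist d) (\<lambda>p. (g (fst p), snd p - s (fst p)))"
proof -
  have PP: "Metric_space P (cyl_dist d')"
    by (rule Metric_space.subspace[OF Metric_space_cyl_dist[OF B] P])
  have QQ: "Metric_space Q (cyl_dist d)"
    by (rule Metric_space.subspace[OF Metric_space_cyl_dist[OF A] Q])
  show ?thesis
    unfolding proper_map_iff[OF PP QQ]
  proof (intro allI impI)
    fix C assume "C \<subseteq> Q" "\<exists>c. \<forall>u\<in>C. \<forall>v\<in>C. cyl_dist d u v \<le> c"
    then obtain c where c: "\<forall>u\<in>C. \<forall>v\<in>C. cyl_dist d u v \<le> c"
      by blast
    have "fst ` C \<subseteq> A"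
      using \<open>C \<subseteq> Q\<close> Q by auto
    moreover have "\<forall>u\<in>fst ` C. \<forall>v\<in>fst ` C. d u v \<le> c"
      using c by (force simp: cyl_dist_def)
    ultimately obtain D where D: "\<forall>x\<in>B. \<forall>y\<in>B. g x \<in> fst ` C \<longrightarrow> g y \<in> fst ` C \<longrightarrow> d' x y \<le> D"
      using g[unfolded proper_map_iff[OF B A]] by blast
    have "\<bar>D\<bar> + 1 > 0"
      by simp
    then obtain S where S: "\<forall>x\<in>B. \<forall>x'\<in>B. d' x x' < \<bar>D\<bar> + 1 \<longrightarrow> dist (s x) (s x') < S"
      using s unfolding controlled_map_def by blast
    show "\<exists>D'. \<forall>p\<in>P. \<forall>p'\<in>P. (g (fst p), snd p - s (fst p)) \<in> C \<longrightarrow>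
        (g (fst p'), snd p' - s (fst p')) \<in> C \<longrightarrow> cyl_dist d' p p' \<le> D'"
    proof (intro exI[of _ "max D (c + S)"] ballI impI)
      fix p p' assume "p \<in> P" "p' \<in> P"
        and C: "(g (fst p), snd p - s (fst p)) \<in> C" "(g (fst p'), snd p' - s (fst p')) \<in> C"
      then have "fst p \<in> B" "fst p' \<in> B"
        using P by auto
      moreover have "g (fst p) \<in> fst ` C" "g (fst p') \<in> fst ` C"
        using C by force+
      ultimately have "d' (fst p) (fst p') \<le> D"
        using D by blast
      then have "\<bar>s (fst p) - s (fst p')\<bar> < S"
        using S \<open>fst p \<in> B\<close> \<open>fst p' \<in> B\<close> by (simp add: dist_real_def)
      moreover have "cyl_dist d (g (fst p), snd p - s (fst p)) (g (fst p'), snd p' - s (fst p')) \<le> c"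
        using c C by blast
      then have "\<bar>(snd p - s (fst p)) - (snd p' - s (fst p'))\<bar> \<le> c"
        by (simp add: cyl_dist_def)
      ultimately have "\<bar>snd p - snd p'\<bar> \<le> c + S"
        by linarith
      with \<open>d' (fst p) (fst p') \<le> D\<close> show "cyl_dist d' p p' \<le> max D (c + S)"
        by (auto simp: cyl_dist_def max_def)
    qed
  qed
qed

lemma coarse_map_shear:
  assumes "Metric_space A d" "Metric_space B d'"
    and "coarse_map B d' A d g" "controlled_map B d' UNIV dist s"
    and "P \<subseteq> B \<times> UNIV" "Q \<subseteq> A \<times> UNIV"
    and "(\<lambda>p. (g (fst p), snd p - s (fst p))) ` P \<subseteq> Q"
  shows "coarse_map P (cyl_dist d') Q (cyl_dist d) (\<lambda>p. (g (fst p), snd p - s (fst p)))"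
  using assms controlled_map_shear[of B d' A d g s P Q] proper_map_shear[of A d B d' g s P Q]
  by (simp add: coarse_map_def)

definition cylinder_above :: "'a set \<Rightarrow> ('a \<Rightarrow> real) \<Rightarrow> ('a \<Rightarrow> real) \<Rightarrow> ('a \<times> real) set" where
  "cylinder_above M q1 q2 =
     {p. fst p \<in> M \<and> q1 (fst p) \<le> snd p \<and> snd p \<le> q1 (fst p) + q2 (fst p)}"

lemma cylinder_add:
  assumes "\<And>x. x \<in> M \<Longrightarrow> 0 \<le> q1 x" "\<And>x. x \<in> M \<Longrightarrow> 0 \<le> q2 x"
  shows "cylinder M (\<lambda>x. q1 x + q2 x) = cylinder M q1 \<union> cylinder_above M q1 q2"
  using assms by (fastforce simp: mem_cylinder cylinder_above_def)

lemma cylinder_above_link: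
  assumes A: "Metric_space A d" and q1: "controlled_map A d UNIV dist q1"
    and nonneg: "\<And>x. x \<in> A \<Longrightarrow> 0 \<le> q2 x" and "r > 0"
  shows "\<exists>R>0. \<forall>p\<in>cylinder A q1. \<forall>p'\<in>cylinder_above A q1 q2. cyl_dist d p p' < r \<longrightarrow>
    (\<exists>z\<in>cylinder A q1 \<inter> cylinder_above A q1 q2. cyl_dist d p z < R \<and> cyl_dist d z p' < R)"
proof -
  obtain S where "S > 0" and S: "\<forall>x\<in>A. \<forall>x'\<in>A. d x x' < r \<longrightarrow> dist (q1 x) (q1 x') < S"
    using q1 \<open>r > 0\<close> unfolding controlled_map_def by blast
  show ?thesis
  proof (intro exI[of _ "S + r"] conjI ballI impI)
    show "S + r > 0"
      using \<open>S > 0\<close> \<open>r > 0\<close> by simp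
    fix p p' assume p: "p \<in> cylinder A q1" and p': "p' \<in> cylinder_above A q1 q2"
      and "cyl_dist d p p' < r"
    then have "d (fst p) (fst p') < r" "\<bar>snd p - snd p'\<bar> < r"
      by (auto simp: cyl_dist_def)
    moreover have "\<bar>q1 (fst p) - q1 (fst p')\<bar> < S"
      using S p p' calculation(1) by (auto simp: mem_cylinder cylinder_above_def dist_real_def)
    moreover have "d (fst p) (fst p) = 0"
      using A p by (simp add: mem_cylinder Metric_space.zero)
    ultimately have "cyl_dist d p (fst p, q1 (fst p)) < S + r"
      and "cyl_dist d (fst p, q1 (fst p)) p' < S + r"
      using p p' \<open>S > 0\<close> by (auto simp: cyl_dist_def mem_cylinder cylinder_above_def)
    moreover have "(fst p, q1 (fst p)) \<in> cylinder A q1 \<inter> cylinder_above A q1 q2"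
      using p nonneg by (auto simp: mem_cylinder cylinder_above_def)
    ultimately show "\<exists>z\<in>cylinder A q1 \<inter> cylinder_above A q1 q2.
        cyl_dist d p z < S + r \<and> cyl_dist d z p' < S + r"
      by blast
  qed
qed

section \<open>Coarse homotopy\<close>

lemma coarsely_homotopic_compose_left:
  assumes "coarsely_homotopic A d M e \<phi> \<psi>" "coarse_map M e N e' f"
  shows "coarsely_homotopic A d N e' (f \<circ> \<phi>) (f \<circ> \<psi>)"
proof -
  obtain q H where "coarse_map A d Rplus dist q" "coarse_map (cylinder A q) (cyl_dist d) M e H"
    and "\<forall>x\<in>A. H (x, 0) = \<phi> x" "\<forall>x\<in>A. H (x, q x) = \<psi> x"
    using assms(1) unfolding coarsely_homotopic_def by blast
  with coarse_map_compose[OF _ assms(2)] show ?thesis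
    unfolding coarsely_homotopic_def by (intro exI[of _ q] exI[of _ "f \<circ> H"]) auto
qed

lemma coarsely_homotopic_compose_right:
  assumes A: "Metric_space A d" and B: "Metric_space B d'"
    and "coarsely_homotopic A d M e \<phi> \<psi>" and g: "coarse_map B d' A d g"
  shows "coarsely_homotopic B d' M e (\<phi> \<circ> g) (\<psi> \<circ> g)"
proof -
  obtain q H where q: "coarse_map A d Rplus dist q"
    and H: "coarse_map (cylinder A q) (cyl_dist d) M e H"
    and H0: "\<forall>x\<in>A. H (x, 0) = \<phi> x" and H1: "\<forall>x\<in>A. H (x, q x) = \<psi> x"
    using assms(3) unfolding coarsely_homotopic_def by blast
  have gA: "g ` B \<subseteq> A"
    using g by (simp add: coarse_map_def)
  have "controlled_map B d' UNIV dist (\<lambda>_. 0)"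
    by (auto simp: controlled_map_def)
  moreover have "(\<lambda>p. (g (fst p), snd p - 0)) ` cylinder B (q \<circ> g) \<subseteq> cylinder A q"
    using gA by (auto simp: mem_cylinder image_subset_iff)
  ultimately have "coarse_map (cylinder B (q \<circ> g)) (cyl_dist d') (cylinder A q) (cyl_dist d)
      (\<lambda>p. (g (fst p), snd p - 0))"
    using coarse_map_shear[OF A B g _ cylinder_subset cylinder_subset] by blast
  then have "coarse_map (cylinder B (q \<circ> g)) (cyl_dist d') M e (H \<circ> (\<lambda>p. (g (fst p), snd p - 0)))"
    using H by (rule coarse_map_compose)
  moreover have "coarse_map B d' Rplus dist (q \<circ> g)"
    using g q by (rule coarse_map_compose)
  ultimately show ?thesis
    unfolding coarsely_homotopic_def using gA H0 H1
    by (intro exI[of _ "q \<circ> g"] exI[of _ "H \<circ> (\<lambda>p. (g (fst p), snd p - 0))"]) auto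
qed

definition stack_homotopy ::
    "('a \<Rightarrow> real) \<Rightarrow> ('a \<times> real \<Rightarrow> 'b) \<Rightarrow> ('a \<times> real \<Rightarrow> 'b) \<Rightarrow> 'a \<times> real \<Rightarrow> 'b" where
  "stack_homotopy q1 H1 H2 p =
     (if snd p \<le> q1 (fst p) then H1 p else H2 (fst p, snd p - q1 (fst p)))"

lemma coarse_map_stack_homotopy:
  assumes A: "Metric_space A d" and M: "Metric_space M e"
    and q1: "coarse_map A d Rplus dist q1" and q2: "coarse_map A d Rplus dist q2"
    and H1: "coarse_map (cylinder A q1) (cyl_dist d) M e H1"
    and H2: "coarse_map (cylinder A q2) (cyl_dist d) M e H2"
    and glue: "\<And>x. x \<in> A \<Longrightarrow> H1 (x, q1 x) = H2 (x, 0)"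
  shows "coarse_map (cylinder A (\<lambda>x. q1 x + q2 x)) (cyl_dist d) M e (stack_homotopy q1 H1 H2)"
proof -
  have nonneg: "\<And>x. x \<in> A \<Longrightarrow> 0 \<le> q1 x" "\<And>x. x \<in> A \<Longrightarrow> 0 \<le> q2 x"
    using q1 q2 by (auto simp: coarse_map_def)
  have q1c: "controlled_map A d UNIV dist q1"
    using q1 by (simp add: coarse_map_def controlled_map_def)
  have "coarse_map (cylinder A q1) (cyl_dist d) M e (stack_homotopy q1 H1 H2) \<longleftrightarrow>
      coarse_map (cylinder A q1) (cyl_dist d) M e H1"
    by (rule coarse_map_cong) (simp add: stack_homotopy_def mem_cylinder)
  with H1 have lower: "coarse_map (cylinder A q1) (cyl_dist d) M e (stack_homotopy q1 H1 H2)"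
    by simp
  let ?shift = "\<lambda>p. (id (fst p), snd p - q1 (fst p))"
  have "coarse_map (cylinder_above A q1 q2) (cyl_dist d) (cylinder A q2) (cyl_dist d) ?shift"
    by (rule coarse_map_shear[OF A A coarse_map_id[OF A order_refl] q1c])
      (auto simp: cylinder_above_def mem_cylinder)
  then have "coarse_map (cylinder_above A q1 q2) (cyl_dist d) M e (H2 \<circ> ?shift)"
    using H2 by (rule coarse_map_compose)
  moreover have "coarse_map (cylinder_above A q1 q2) (cyl_dist d) M e (stack_homotopy q1 H1 H2) \<longleftrightarrow>
      coarse_map (cylinder_above A q1 q2) (cyl_dist d) M e (H2 \<circ> ?shift)"
    by (rule coarse_map_cong) (auto simp: stack_homotopy_def cylinder_above_def glue)
  ultimately have upper: "coarse_map (cylinder_above A q1 q2) (cyl_dist d) M e (stack_homotopy q1 H1 H2)"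
    by simp
  have "Metric_space (cylinder A q1 \<union> cylinder_above A q1 q2) (cyl_dist d)"
    by (rule Metric_space.subspace[OF Metric_space_cyl_dist[OF A]])
      (auto simp: mem_cylinder cylinder_above_def)
  from coarse_map_Un[OF this M lower upper cylinder_above_link[OF A q1c nonneg(2)]]
  show ?thesis
    by (simp add: cylinder_add nonneg)
qed

lemma coarsely_homotopic_trans:
  assumes A: "Metric_space A d" and M: "Metric_space M e"
    and "coarsely_homotopic A d M e \<phi> \<psi>" "coarsely_homotopic A d M e \<psi> \<rho>"
  shows "coarsely_homotopic A d M e \<phi> \<rho>"
proof -
  obtain q1 H1 where q1: "coarse_map A d Rplus dist q1"
    and H1: "coarse_map (cylinder A q1) (cyl_dist d) M e H1"
    and H10: "\<forall>x\<in>A. H1 (x, 0) = \<phi> x" and H11: "\<forall>x\<in>A. H1 (x, q1 x) = \<psi> x"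
    using assms(3) unfolding coarsely_homotopic_def by blast
  obtain q2 H2 where q2: "coarse_map A d Rplus dist q2"
    and H2: "coarse_map (cylinder A q2) (cyl_dist d) M e H2"
    and H20: "\<forall>x\<in>A. H2 (x, 0) = \<psi> x" and H21: "\<forall>x\<in>A. H2 (x, q2 x) = \<rho> x"
    using assms(4) unfolding coarsely_homotopic_def by blast
  have nonneg: "0 \<le> q1 x" "0 \<le> q2 x" if "x \<in> A" for x
    using q1 q2 that by (auto simp: coarse_map_def)
  have "stack_homotopy q1 H1 H2 (x, 0) = \<phi> x" if "x \<in> A" for x
    using that H10 nonneg by (simp add: stack_homotopy_def)
  moreover have "stack_homotopy q1 H1 H2 (x, q1 x + q2 x) = \<rho> x" if "x \<in> A" for x
    using that H11 H20 H21 nonneg[OF that] by (auto simp: stack_homotopy_def)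
  moreover have "coarse_map (cylinder A (\<lambda>x. q1 x + q2 x)) (cyl_dist d) M e (stack_homotopy q1 H1 H2)"
    using H11 H20 by (intro coarse_map_stack_homotopy[OF A M q1 q2 H1 H2]) simp
  ultimately show ?thesis
    unfolding coarsely_homotopic_def using coarse_map_add_Rplus[OF A q1 q2]
    by (intro exI[of _ "\<lambda>x. q1 x + q2 x"] exI[of _ "stack_homotopy q1 H1 H2"]) simp
qed

section \<open>Coarse Lusternik-Schnirelmann category\<close>

lemma coarsely_categorical_preimage:
  assumes X: "Metric_space X dX" and Y: "Metric_space Y dY"
    and f: "coarse_map X dX Y dY f" and g: "coarse_map Y dY X dX g"
    and fg: "coarsely_homotopic Y dY Y dY (f \<circ> g) id"
    and U: "coarsely_categorical X dX U"
  shows "coarsely_categorical Y dY {y \<in> Y. g y \<in> U}"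
proof -
  let ?V = "{y \<in> Y. g y \<in> U}"
  obtain \<alpha> j where "U \<subseteq> X" and \<alpha>: "coarse_map Rplus dist X dX \<alpha>"
    and j: "coarse_map U dX Rplus dist j" and \<alpha>j: "coarsely_homotopic U dX X dX (\<alpha> \<circ> j) id"
    using U unfolding coarsely_categorical_def by blast
  have "?V \<subseteq> Y"
    by blast
  have V: "Metric_space ?V dY"
    by (rule Metric_space.subspace[OF Y]) blast
  have "coarse_map ?V dY U dX g"
    using coarse_map_restrict[OF Y \<open>?V \<subseteq> Y\<close> g]
    by (rule coarse_map_corestrict[OF X \<open>U \<subseteq> X\<close>, rotated]) blast
  then have "coarsely_homotopic ?V dY Y dY (f \<circ> \<alpha> \<circ> j \<circ> g) (f \<circ> g)"
    using coarsely_homotopic_compose_left[OF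
        coarsely_homotopic_compose_right[OF Metric_space.subspace[OF X \<open>U \<subseteq> X\<close>] V \<alpha>j] f]
    by (simp add: o_assoc)
  moreover have "coarsely_homotopic ?V dY Y dY (f \<circ> g) id"
    using coarsely_homotopic_compose_right[OF Y V fg coarse_map_id[OF Y \<open>?V \<subseteq> Y\<close>]] by simp
  ultimately have "coarsely_homotopic ?V dY Y dY ((f \<circ> \<alpha>) \<circ> (j \<circ> g)) id"
    using coarsely_homotopic_trans[OF V Y] by (simp add: o_assoc)
  moreover have "coarse_map Rplus dist Y dY (f \<circ> \<alpha>)"
    using \<alpha> f by (rule coarse_map_compose)
  moreover have "coarse_map ?V dY Rplus dist (j \<circ> g)"
    using \<open>coarse_map ?V dY U dX g\<close> j by (rule coarse_map_compose)
  ultimately show ?thesis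
    unfolding coarsely_categorical_def using \<open>?V \<subseteq> Y\<close>
    by (intro conjI exI[of _ "f \<circ> \<alpha>"] exI[of _ "j \<circ> g"])
qed

lemma ccat_cover_transfer:
  assumes X: "Metric_space X dX" and Y: "Metric_space Y dY"
    and f: "coarse_map X dX Y dY f" and g: "coarse_map Y dY X dX g"
    and fg: "coarsely_homotopic Y dY Y dY (f \<circ> g) id"
    and "ccat_cover X dX k"
  shows "ccat_cover Y dY k"
proof -
  obtain U where U: "\<forall>i\<le>k. coarsely_categorical X dX (U i)" and XU: "X = (\<Union>i\<le>k. U i)"
    using assms(6) unfolding ccat_cover_def by blast
  have "g ` Y \<subseteq> X"
    using g by (simp add: coarse_map_def)
  then have "Y = (\<Union>i\<le>k. {y \<in> Y. g y \<in> U i})"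
    using XU by blast
  moreover have "\<forall>i\<le>k. coarsely_categorical Y dY {y \<in> Y. g y \<in> U i}"
    using coarsely_categorical_preimage[OF X Y f g fg] U by blast
  ultimately show ?thesis
    unfolding ccat_cover_def by (intro exI[of _ "\<lambda>i. {y \<in> Y. g y \<in> U i}"]) simp
qed

theorem proposition2p16:
  fixes X :: "'a set" and dX :: "'a \<Rightarrow> 'a \<Rightarrow> real"
    and Y :: "'b set" and dY :: "'b \<Rightarrow> 'b \<Rightarrow> real"
  assumes "Metric_space X dX" and "Metric_space Y dY"
    and "coarse_homotopy_equivalent X dX Y dY"
  shows "c_cat X dX = c_cat Y dY"
proof -
  obtain f g where f: "coarse_map X dX Y dY f" and g: "coarse_map Y dY X dX g"
    and gf: "coarsely_homotopic X dX X dX (g \<circ> f) id"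
    and fg: "coarsely_homotopic Y dY Y dY (f \<circ> g) id"
    using assms(3) unfolding coarse_homotopy_equivalent_def by blast
  have "ccat_cover X dX k \<longleftrightarrow> ccat_cover Y dY k" for k
    using ccat_cover_transfer[OF assms(1,2) f g fg] ccat_cover_transfer[OF assms(2,1) g f gf]
    by blast
  then have "ccat_cover X dX = ccat_cover Y dY"
    by (rule ext)
  then show ?thesis
    unfolding c_cat_def by simp
qed

end
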